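(* Suppose $A,B,C\subset\mathcal R$ are adjacent zones in that order (i.e. $A$ and $B$ are adjacent, $B$ and $C$ are adjacent, and $B$ lies between $A$ and $C$), and that $A$ and $C$ are closed. Then $A\cup B\cup C$ is closed.
   Context: Let $\mathcal R$ be the set of germs at $0$ of analytic arcs $\{x=\alpha(y),\ y\ge 0\}$ in the closed upper half-plane of $\mathbb R^2$, where $\alpha$ is given by a convergent Puiseux series with positive rational exponents. The order $\mathcal O(\gamma)$ of a Puiseux series is the smallest exponent with nonzero coefficient ($\mathcal O(0)=+\infty$). Write $\alpha<\beta$ if $\alpha(y)<\beta(y)$ for all sufficiently small $y>0$. A subset $A\subset\mathcal R$ is a zone (connected) if $\alpha,\beta\in A$, $\alpha<\gamma<\beta$, $\gamma\in\mathcal R$ imply $\gamma\in A$. Distance $d(\alpha,\beta)=1/\mathcal O(\alpha-\beta)$ (with $1/\infty=0$); width $w(A)=\sup\{d(\alpha,\beta):\alpha,\beta\in A\}$. A zone is closed if there exist $\alpha,\beta\in A$ with $d(\alpha,\beta)=w(A)$, and open otherwise. Two zones $A,B$ are adjacent if $A\cup B$ is connected and $A\cap B=\emptyset$. *)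

theory Defs
  imports "HOL-Analysis.Analysis" "HOL-Library.Extended_Real"
begin

text \<open>Germs at 0 (from the right) of real functions y \<mapsto> x.\<close>

definition germ_eq :: "(real \<Rightarrow> real) \<Rightarrow> (real \<Rightarrow> real) \<Rightarrow> bool" where
  "germ_eq f g \<longleftrightarrow> (\<forall>\<^sub>F y in at_right (0::real). f y = g y)"

lemma germ_eq_equivp: "equivp germ_eq"
  unfolding germ_eq_def
  by (intro equivpI reflpI sympI transpI) (auto elim: eventually_elim2 simp: eq_commute)

quotient_type rgerm = "real \<Rightarrow> real" / germ_eq
  by (rule germ_eq_equivp)

text \<open>N, a represent the convergent Puiseux series sum over k of a k * y^(k/N), with a 0 = 0
  (all exponents positive rationals); f agrees with it for small y > 0.\<close>

definition puiseux_rep :: "nat \<Rightarrow> (nat \<Rightarrow> real) \<Rightarrow> (real \<Rightarrow> real) \<Rightarrow> bool" where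
  "puiseux_rep N a f \<longleftrightarrow> N > 0 \<and> a 0 = 0 \<and>
     (\<exists>r>0. \<forall>t. \<bar>t\<bar> < r \<longrightarrow> summable (\<lambda>k. a k * t ^ k)) \<and>
     (\<forall>\<^sub>F y in at_right (0::real). f y = (\<Sum>k. a k * (y powr (1 / real N)) ^ k))"

lemma puiseux_rep_germ_eq:
  assumes "germ_eq f g" shows "puiseux_rep N a f = puiseux_rep N a g"
proof -
  have "(\<forall>\<^sub>F y in at_right (0::real). f y = (\<Sum>k. a k * (y powr (1 / real N)) ^ k)) =
        (\<forall>\<^sub>F y in at_right (0::real). g y = (\<Sum>k. a k * (y powr (1 / real N)) ^ k))"
    using assms unfolding germ_eq_def by (auto elim: eventually_elim2)
  then show ?thesis unfolding puiseux_rep_def by simp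
qed

definition puiseux_ord_fun :: "(real \<Rightarrow> real) \<Rightarrow> ereal" where
  "puiseux_ord_fun f = (THE q. \<exists>N a. puiseux_rep N a f \<and>
       q = (INF k\<in>{k. a k \<noteq> 0}. ereal (real k / real N)))"

lift_definition is_arc :: "rgerm \<Rightarrow> bool" is "\<lambda>f. \<exists>N a. puiseux_rep N a f"
  using puiseux_rep_germ_eq by blast

lift_definition puiseux_ord :: "rgerm \<Rightarrow> ereal" is puiseux_ord_fun
  unfolding puiseux_ord_fun_def using puiseux_rep_germ_eq by presburger

lift_definition germ_minus :: "rgerm \<Rightarrow> rgerm \<Rightarrow> rgerm" is "\<lambda>f g y. f y - g y"
  unfolding germ_eq_def by (auto elim: eventually_elim2)

lift_definition germ_less :: "rgerm \<Rightarrow> rgerm \<Rightarrow> bool" is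
  "\<lambda>f g. \<forall>\<^sub>F y in at_right (0::real). f y < g y"
proof -
  fix f f' g g' assume "germ_eq f f'" "germ_eq g g'"
  then have "\<forall>\<^sub>F y in at_right (0::real). f y = f' y \<and> g y = g' y"
    unfolding germ_eq_def by (auto intro: eventually_conj)
  then show "(\<forall>\<^sub>F y in at_right (0::real). f y < g y) = (\<forall>\<^sub>F y in at_right (0::real). f' y < g' y)"
    by (auto elim: eventually_elim2)
qed

definition arcs :: "rgerm set" where "arcs = {\<alpha>. is_arc \<alpha>}"

text \<open>d(\<alpha>,\<beta>) = 1 / O(\<alpha> - \<beta>), with 1/\<infinity> = 0 (ereal: inverse \<infinity> = 0).\<close>
definition arc_dist :: "rgerm \<Rightarrow> rgerm \<Rightarrow> ereal" where
  "arc_dist \<alpha> \<beta> = 1 / puiseux_ord (germ_minus \<alpha> \<beta>)"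

definition width :: "rgerm set \<Rightarrow> ereal" where
  "width A = (SUP p\<in>A \<times> A. arc_dist (fst p) (snd p))"

definition zone :: "rgerm set \<Rightarrow> bool" where
  "zone A \<longleftrightarrow> A \<subseteq> arcs \<and>
     (\<forall>\<alpha>\<in>A. \<forall>\<beta>\<in>A. \<forall>\<gamma>\<in>arcs. germ_less \<alpha> \<gamma> \<and> germ_less \<gamma> \<beta> \<longrightarrow> \<gamma> \<in> A)"

definition closed_zone :: "rgerm set \<Rightarrow> bool" where
  "closed_zone A \<longleftrightarrow> (\<exists>\<alpha>\<in>A. \<exists>\<beta>\<in>A. arc_dist \<alpha> \<beta> = width A)"

definition adjacent :: "rgerm set \<Rightarrow> rgerm set \<Rightarrow> bool" where
  "adjacent A B \<longleftrightarrow> zone (A \<union> B) \<and> A \<inter> B = {}"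

definition lies_between :: "rgerm set \<Rightarrow> rgerm set \<Rightarrow> rgerm set \<Rightarrow> bool" where
  "lies_between A B C \<longleftrightarrow> (\<forall>a\<in>A. \<forall>b\<in>B. \<forall>c\<in>C. germ_less a b \<and> germ_less b c)"

end

theory Submission
  imports Defs
begin

text \<open>The order of a Puiseux series is detected analytically: for \<open>e\<close> below the order,
  \<open>f y / y powr e \<rightarrow> 0\<close> as \<open>y \<rightarrow> 0\<^sup>+\<close>, while at a finite order the quotient tends to the
  nonzero leading coefficient. From this, the order of differences behaves like a valuation,
  so \<open>arc_dist\<close> is a symmetric ultrametric which grows as the arcs move apart in the order.
  If \<open>\<alpha>, \<alpha>'\<close> realise the width of \<open>A\<close> and \<open>\<gamma>, \<gamma>'\<close> that of \<open>C\<close>, every arc of \<open>A \<union> B \<union> C\<close>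
  lies within \<open>max (width A) (max (width C) (arc_dist \<alpha> \<gamma>))\<close> of \<open>\<alpha>\<close> (those of \<open>B\<close> because they
  lie between \<open>\<alpha>\<close> and \<open>\<gamma>\<close>); by the ultrametric inequality this bounds the width of the union,
  and it is attained by one of the pairs \<open>(\<alpha>, \<alpha>')\<close>, \<open>(\<gamma>, \<gamma>')\<close>, \<open>(\<alpha>, \<gamma>)\<close>.\<close>

definition leading_term :: "real \<Rightarrow> real \<Rightarrow> (real \<Rightarrow> real) \<Rightarrow> bool" where
  "leading_term e c f \<longleftrightarrow> c \<noteq> 0 \<and> ((\<lambda>y. f y / y powr e) \<longlongrightarrow> c) (at_right 0)"

definition puiseux_coeff_order :: "nat \<Rightarrow> (nat \<Rightarrow> real) \<Rightarrow> ereal" where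
  "puiseux_coeff_order N a = (INF k\<in>{k. a k \<noteq> 0}. ereal (real k / real N))"

abbreviation has_puiseux_rep :: "(real \<Rightarrow> real) \<Rightarrow> bool" where
  "has_puiseux_rep f \<equiv> \<exists>N a. puiseux_rep N a f"

lemma powr_tendsto_zero_at_right:
  assumes "d > 0" shows "((\<lambda>y. y powr d) \<longlongrightarrow> 0) (at_right (0::real))"
  by (rule tendsto_zero_powrI)
    (use assms in \<open>auto intro: tendsto_ident_at eventually_at_right_less[THEN eventually_mono]\<close>)

lemma tendsto_div_powr_zero_if_less:
  fixes f :: "real \<Rightarrow> real"
  assumes lim: "((\<lambda>y. f y / y powr e') \<longlongrightarrow> c) (at_right 0)" and "e < e'"
  shows "((\<lambda>y. f y / y powr e) \<longlongrightarrow> 0) (at_right 0)"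
proof -
  have "((\<lambda>y. f y / y powr e' * y powr (e' - e)) \<longlongrightarrow> c * 0) (at_right 0)"
    using lim powr_tendsto_zero_at_right[of "e' - e"] \<open>e < e'\<close> by (intro tendsto_mult) auto
  moreover have "\<forall>\<^sub>F y in at_right 0. f y / y powr e' * y powr (e' - e) = f y / y powr e"
    using eventually_at_right_less[of "0::real"]
    by eventually_elim (simp add: powr_diff)
  ultimately show ?thesis
    by (simp add: tendsto_cong)
qed

lemma leading_term_not_tendsto_zero:
  assumes "leading_term e c f" shows "\<not> ((\<lambda>y. f y / y powr e) \<longlongrightarrow> 0) (at_right 0)"
  using assms tendsto_unique[OF trivial_limit_at_right_real] unfolding leading_term_def by blast

lemma leading_term_not_eventually_zero:
  assumes "leading_term e c f" shows "\<not> (\<forall>\<^sub>F y in at_right 0. f y = 0)"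
proof
  assume "\<forall>\<^sub>F y in at_right 0. f y = 0"
  then have "((\<lambda>y. f y / y powr e) \<longlongrightarrow> 0) (at_right 0)"
    by (simp add: tendsto_eventually eventually_mono)
  with assms show False
    using leading_term_not_tendsto_zero by blast
qed

lemma leading_term_exponent_unique:
  assumes "leading_term e c f" "leading_term e' c' f" shows "e = e'"
proof -
  have "\<not> e < e'" if "leading_term e c f" "leading_term e' c' f" for e c e' c'
  proof
    assume "e < e'"
    with that(2) have "((\<lambda>y. f y / y powr e) \<longlongrightarrow> 0) (at_right 0)"
      unfolding leading_term_def by (blast intro: tendsto_div_powr_zero_if_less)
    with that(1) show False
      using leading_term_not_tendsto_zero by blast
  qed
  with assms show ?thesis by (meson linorder_neqE_linordered_idom)
qed

lemma powser_div_power_tendsto: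
  fixes a :: "nat \<Rightarrow> real"
  assumes "r > 0" and summ: "\<And>t. \<bar>t\<bar> < r \<Longrightarrow> summable (\<lambda>k. a k * t ^ k)"
    and "\<forall>k<k0. a k = 0"
  shows "((\<lambda>t. (\<Sum>k. a k * t ^ k) / t ^ k0) \<longlongrightarrow> a k0) (at 0)"
proof -
  define h where "h t = (\<Sum>n. a (n + k0) * t ^ n)" for t
  have summ_h: "summable (\<lambda>n. a (n + k0) * t ^ n)" if "\<bar>t\<bar> < r" for t
    using summ[OF that] by (simp add: summable_powser_ignore_initial_segment)
  have split: "(\<Sum>k. a k * t ^ k) = t ^ k0 * h t" if "\<bar>t\<bar> < r" for t
  proof -
    have "(\<Sum>k. a k * t ^ k) = (\<Sum>n. a (n + k0) * t ^ (n + k0))"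
      using suminf_split_initial_segment[OF summ[OF that], of k0] \<open>\<forall>k<k0. a k = 0\<close> by simp
    also have "\<dots> = (\<Sum>n. t ^ k0 * (a (n + k0) * t ^ n))"
      by (simp add: power_add algebra_simps)
    also have "\<dots> = t ^ k0 * h t"
      unfolding h_def using summ_h[OF that] by (rule suminf_mult)
    finally show ?thesis .
  qed
  have "isCont h 0"
    unfolding h_def using \<open>r > 0\<close> by (intro isCont_powser[OF summ_h[of "r / 2"]]) auto
  then have "(h \<longlongrightarrow> a k0) (at 0)"
    by (simp add: isCont_def h_def powser_zero)
  moreover have "\<forall>\<^sub>F t in at 0. h t = (\<Sum>k. a k * t ^ k) / t ^ k0"
  proof -
    have "\<forall>\<^sub>F t in at 0. t \<noteq> 0 \<and> \<bar>t\<bar> < r"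
      using \<open>r > 0\<close> by (auto simp: eventually_at intro!: exI[of _ r])
    then show ?thesis
      by eventually_elim (simp add: split)
  qed
  ultimately show ?thesis
    by (rule Lim_transform_eventually)
qed

lemma puiseux_rep_leading_term:
  assumes rep: "puiseux_rep N a f" and "a k0 \<noteq> 0" and "\<forall>k<k0. a k = 0"
  shows "leading_term (real k0 / real N) (a k0) f"
proof -
  from rep obtain r where "r > 0" and summ: "\<And>t. \<bar>t\<bar> < r \<Longrightarrow> summable (\<lambda>k. a k * t ^ k)"
    and ev: "\<forall>\<^sub>F y in at_right 0. f y = (\<Sum>k. a k * (y powr (1 / real N)) ^ k)"
    and "N > 0"
    unfolding puiseux_rep_def by blast
  have "filterlim (\<lambda>y. y powr (1 / real N)) (at 0) (at_right 0)"
    using powr_tendsto_zero_at_right[of "1 / real N"] \<open>N > 0\<close>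
    by (auto simp: filterlim_at eventually_at_right_less[THEN eventually_mono])
  then have "((\<lambda>y. (\<Sum>k. a k * (y powr (1 / real N)) ^ k) / (y powr (1 / real N)) ^ k0)
      \<longlongrightarrow> a k0) (at_right 0)"
    using filterlim_compose[OF powser_div_power_tendsto[OF \<open>r > 0\<close> summ \<open>\<forall>k<k0. a k = 0\<close>]]
    by simp
  moreover have "\<forall>\<^sub>F y in at_right 0.
      (\<Sum>k. a k * (y powr (1 / real N)) ^ k) / (y powr (1 / real N)) ^ k0 = f y / y powr (real k0 / real N)"
    using ev eventually_at_right_less[of "0::real"]
  proof eventually_elim
    case (elim y)
    have "(y powr (1 / real N)) ^ k0 = y powr (real k0 / real N)"
      using \<open>y > 0\<close> by (simp add: powr_realpow[symmetric] powr_powr)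
    with elim show ?case by simp
  qed
  ultimately show ?thesis
    unfolding leading_term_def using \<open>a k0 \<noteq> 0\<close> by (simp add: tendsto_cong)
qed

lemma puiseux_rep_cases:
  assumes rep: "puiseux_rep N a f"
  obtains "\<forall>\<^sub>F y in at_right 0. f y = 0" "puiseux_coeff_order N a = \<infinity>"
    | e c where "leading_term e c f" "puiseux_coeff_order N a = ereal e"
proof (cases "\<forall>k. a k = 0")
  case True
  with rep have "\<forall>\<^sub>F y in at_right 0. f y = 0"
    unfolding puiseux_rep_def by (auto elim: eventually_mono)
  moreover from True have "puiseux_coeff_order N a = \<infinity>"
    by (simp add: puiseux_coeff_order_def top_ereal_def)
  ultimately show thesis by (rule that(1))
next
  case False
  define k0 where "k0 = (LEAST k. a k \<noteq> 0)"
  have "a k0 \<noteq> 0"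
    using False unfolding k0_def by (metis (mono_tags) LeastI)
  moreover have "\<forall>k<k0. a k = 0"
    unfolding k0_def using not_less_Least by blast
  ultimately have "leading_term (real k0 / real N) (a k0) f"
    by (rule puiseux_rep_leading_term[OF rep])
  moreover have "puiseux_coeff_order N a = ereal (real k0 / real N)"
    unfolding puiseux_coeff_order_def
  proof (rule antisym)
    show "(INF k\<in>{k. a k \<noteq> 0}. ereal (real k / real N)) \<le> ereal (real k0 / real N)"
      using \<open>a k0 \<noteq> 0\<close> by (intro INF_lower2[of k0]) auto
    show "ereal (real k0 / real N) \<le> (INF k\<in>{k. a k \<noteq> 0}. ereal (real k / real N))"
    proof (rule INF_greatest)
      fix k assume "k \<in> {k. a k \<noteq> 0}"
      then have "k0 \<le> k" unfolding k0_def by (simp add: Least_le)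
      then show "ereal (real k0 / real N) \<le> ereal (real k / real N)"
        by (simp add: divide_right_mono)
    qed
  qed
  ultimately show thesis by (rule that(2))
qed

lemma puiseux_coeff_order_unique:
  assumes "puiseux_rep N a f" "puiseux_rep M b f"
  shows "puiseux_coeff_order N a = puiseux_coeff_order M b"
  using assms
  by (metis puiseux_rep_cases leading_term_exponent_unique leading_term_not_eventually_zero)

lemma puiseux_ord_fun_eq_coeff_order:
  assumes "puiseux_rep N a f" shows "puiseux_ord_fun f = puiseux_coeff_order N a"
  unfolding puiseux_ord_fun_def puiseux_coeff_order_def[symmetric]
  using assms puiseux_coeff_order_unique by (intro the_equality) blast+

lemma puiseux_ord_fun_nonneg: "has_puiseux_rep f \<Longrightarrow> 0 \<le> puiseux_ord_fun f"
  by (auto simp: puiseux_ord_fun_eq_coeff_order puiseux_coeff_order_def intro!: INF_greatest)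

lemma tendsto_div_powr_zero_below_puiseux_ord:
  assumes "has_puiseux_rep f" "ereal e < puiseux_ord_fun f"
  shows "((\<lambda>y. f y / y powr e) \<longlongrightarrow> 0) (at_right 0)"
proof -
  obtain N a where rep: "puiseux_rep N a f" using assms(1) by blast
  then show ?thesis
  proof (cases rule: puiseux_rep_cases)
    case 1
    then show ?thesis by (simp add: tendsto_eventually eventually_mono)
  next
    case (2 e' c)
    with assms(2) rep have "e < e'" by (simp add: puiseux_ord_fun_eq_coeff_order)
    with \<open>leading_term e' c f\<close> show ?thesis
      unfolding leading_term_def by (blast intro: tendsto_div_powr_zero_if_less)
  qed
qed

lemma puiseux_ord_fun_finiteE:
  assumes "has_puiseux_rep f" "puiseux_ord_fun f \<noteq> \<infinity>"
  obtains e where "puiseux_ord_fun f = ereal e" "\<not> ((\<lambda>y. f y / y powr e) \<longlongrightarrow> 0) (at_right 0)"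
proof -
  obtain N a where rep: "puiseux_rep N a f" using assms(1) by blast
  then show ?thesis
  proof (cases rule: puiseux_rep_cases)
    case 1
    with assms(2) rep show ?thesis by (simp add: puiseux_ord_fun_eq_coeff_order)
  next
    case (2 e c)
    with rep show ?thesis
      by (intro that[of e]) (simp_all add: puiseux_ord_fun_eq_coeff_order leading_term_not_tendsto_zero)
  qed
qed

lemma puiseux_rep_refine:
  assumes rep: "puiseux_rep N a f" and "M > 0"
  shows "puiseux_rep (N * M) (\<lambda>k. if M dvd k then a (k div M) else 0) f"
proof -
  define b where "b = (\<lambda>k. if M dvd k then a (k div M) else 0)"
  from rep obtain r where "r > 0" and summ: "\<And>t. \<bar>t\<bar> < r \<Longrightarrow> summable (\<lambda>k. a k * t ^ k)"
    and ev: "\<forall>\<^sub>F y in at_right 0. f y = (\<Sum>k. a k * (y powr (1 / real N)) ^ k)"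
    and "N > 0" "a 0 = 0"
    unfolding puiseux_rep_def by blast
  have mult_M: "strict_mono (\<lambda>j. M * j)"
    using \<open>M > 0\<close> by (simp add: strict_mono_def)
  have outside: "b n * t ^ n = 0" if "n \<notin> range (\<lambda>j. M * j)" for n and t :: real
    using that unfolding b_def by (auto elim: dvdE)
  have reindex: "(\<lambda>j. b (M * j) * t ^ (M * j)) = (\<lambda>j. a j * (t ^ M) ^ j)" for t :: real
    using \<open>M > 0\<close> unfolding b_def by (simp add: power_mult)
  have summ_b: "summable (\<lambda>k. b k * t ^ k)" if "\<bar>t\<bar> < min 1 r" for t :: real
  proof -
    have "\<bar>t\<bar> ^ M \<le> \<bar>t\<bar> ^ 1"
      using that \<open>M > 0\<close> by (intro power_decreasing) auto
    with that have "\<bar>t ^ M\<bar> < r" by (simp add: power_abs)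
    then have "summable (\<lambda>j. b (M * j) * t ^ (M * j))"
      unfolding reindex by (rule summ)
    then show ?thesis
      using summable_mono_reindex[OF mult_M, of "\<lambda>k. b k * t ^ k"] outside by simp
  qed
  have sum_b: "(\<Sum>k. b k * t ^ k) = (\<Sum>j. a j * (t ^ M) ^ j)" for t :: real
    using suminf_mono_reindex[OF mult_M, of "\<lambda>k. b k * t ^ k"] outside reindex by simp
  have "\<forall>\<^sub>F y in at_right 0. f y = (\<Sum>k. b k * (y powr (1 / real (N * M))) ^ k)"
    using ev eventually_at_right_less[of "0::real"]
  proof eventually_elim
    case (elim y)
    have "(y powr (1 / real (N * M))) ^ M = y powr (1 / real N)"
      using \<open>y > 0\<close> \<open>M > 0\<close> by (simp add: powr_realpow[symmetric] powr_powr)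
    with elim show ?case
      unfolding sum_b by simp
  qed
  moreover have "b 0 = 0"
    using \<open>a 0 = 0\<close> unfolding b_def by simp
  ultimately show ?thesis
    unfolding puiseux_rep_def b_def[symmetric]
    using \<open>N > 0\<close> \<open>M > 0\<close> \<open>r > 0\<close> summ_b by (intro conjI exI[of _ "min 1 r"]) simp_all
qed

lemma puiseux_rep_diff:
  assumes f: "puiseux_rep N a f" and g: "puiseux_rep N b g"
  shows "puiseux_rep N (\<lambda>k. a k - b k) (\<lambda>y. f y - g y)"
proof -
  from f obtain r1 where "r1 > 0" and summ_a: "\<And>t. \<bar>t\<bar> < r1 \<Longrightarrow> summable (\<lambda>k. a k * t ^ k)"
    and ev_f: "\<forall>\<^sub>F y in at_right 0. f y = (\<Sum>k. a k * (y powr (1 / real N)) ^ k)"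
    and "N > 0" "a 0 = 0"
    unfolding puiseux_rep_def by blast
  from g obtain r2 where "r2 > 0" and summ_b: "\<And>t. \<bar>t\<bar> < r2 \<Longrightarrow> summable (\<lambda>k. b k * t ^ k)"
    and ev_g: "\<forall>\<^sub>F y in at_right 0. g y = (\<Sum>k. b k * (y powr (1 / real N)) ^ k)"
    and "b 0 = 0"
    unfolding puiseux_rep_def by blast
  define r where "r = min r1 r2"
  have summ: "summable (\<lambda>k. a k * t ^ k)" "summable (\<lambda>k. b k * t ^ k)" if "\<bar>t\<bar> < r" for t
    using that summ_a summ_b unfolding r_def by auto
  have "\<forall>\<^sub>F y in at_right 0. y powr (1 / real N) < r"
    using order_tendstoD(2)[OF powr_tendsto_zero_at_right, of "1 / real N" r]
      \<open>N > 0\<close> \<open>r1 > 0\<close> \<open>r2 > 0\<close>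
    unfolding r_def by simp
  then have "\<forall>\<^sub>F y in at_right 0. f y - g y = (\<Sum>k. (a k - b k) * (y powr (1 / real N)) ^ k)"
    using ev_f ev_g eventually_at_right_less[of "0::real"]
    by eventually_elim (simp add: suminf_diff[OF summ] left_diff_distrib)
  then show ?thesis
    unfolding puiseux_rep_def
    using \<open>N > 0\<close> \<open>a 0 = 0\<close> \<open>b 0 = 0\<close> \<open>r1 > 0\<close> \<open>r2 > 0\<close> summable_diff[OF summ]
    by (intro conjI exI[of _ r]) (simp_all add: r_def left_diff_distrib)
qed

lemma has_puiseux_rep_diff:
  assumes "has_puiseux_rep f" "has_puiseux_rep g"
  shows "has_puiseux_rep (\<lambda>y. f y - g y)"
proof -
  obtain N a M b where f: "puiseux_rep N a f" and g: "puiseux_rep M b g"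
    using assms by blast
  then have "N > 0" "M > 0" unfolding puiseux_rep_def by auto
  have "puiseux_rep (N * M) (\<lambda>k. if M dvd k then a (k div M) else 0) f"
    using puiseux_rep_refine[OF f \<open>M > 0\<close>] .
  moreover have "puiseux_rep (N * M) (\<lambda>k. if N dvd k then b (k div N) else 0) g"
    using puiseux_rep_refine[OF g \<open>N > 0\<close>] by (simp add: mult.commute)
  ultimately show ?thesis
    using puiseux_rep_diff by blast
qed

lemma puiseux_ord_fun_diff_commute:
  assumes "has_puiseux_rep f" "has_puiseux_rep g"
  shows "puiseux_ord_fun (\<lambda>y. f y - g y) = puiseux_ord_fun (\<lambda>y. g y - f y)"
proof -
  have "puiseux_ord_fun (\<lambda>y. f y - g y) \<le> puiseux_ord_fun (\<lambda>y. g y - f y)"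
    if f: "has_puiseux_rep f" and g: "has_puiseux_rep g" for f g
  proof (rule ccontr)
    assume "\<not> ?thesis"
    then have less: "puiseux_ord_fun (\<lambda>y. g y - f y) < puiseux_ord_fun (\<lambda>y. f y - g y)"
      by simp
    then have finite: "puiseux_ord_fun (\<lambda>y. g y - f y) \<noteq> \<infinity>"
      by auto
    obtain e where e: "puiseux_ord_fun (\<lambda>y. g y - f y) = ereal e"
      and not_zero: "\<not> ((\<lambda>y. (g y - f y) / y powr e) \<longlongrightarrow> 0) (at_right 0)"
      by (rule puiseux_ord_fun_finiteE[OF has_puiseux_rep_diff[OF g f] finite])
    have "((\<lambda>y. (f y - g y) / y powr e) \<longlongrightarrow> 0) (at_right 0)"
      using less e by (intro tendsto_div_powr_zero_below_puiseux_ord has_puiseux_rep_diff[OF f g]) simp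
    then have "((\<lambda>y. - ((f y - g y) / y powr e)) \<longlongrightarrow> - 0) (at_right 0)"
      by (rule tendsto_minus)
    with not_zero show False
      by (simp add: minus_divide_left)
  qed
  with assms show ?thesis
    by (simp add: order_antisym)
qed

lemma puiseux_ord_fun_diff_ultrametric:
  assumes "has_puiseux_rep f" "has_puiseux_rep g" "has_puiseux_rep h"
  shows "min (puiseux_ord_fun (\<lambda>y. f y - g y)) (puiseux_ord_fun (\<lambda>y. g y - h y))
    \<le> puiseux_ord_fun (\<lambda>y. f y - h y)"
proof (rule ccontr)
  assume "\<not> ?thesis"
  then have less: "puiseux_ord_fun (\<lambda>y. f y - h y) < puiseux_ord_fun (\<lambda>y. f y - g y)"
    "puiseux_ord_fun (\<lambda>y. f y - h y) < puiseux_ord_fun (\<lambda>y. g y - h y)"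
    by (simp_all add: not_le)
  then have finite: "puiseux_ord_fun (\<lambda>y. f y - h y) \<noteq> \<infinity>"
    by auto
  obtain e where e: "puiseux_ord_fun (\<lambda>y. f y - h y) = ereal e"
    and not_zero: "\<not> ((\<lambda>y. (f y - h y) / y powr e) \<longlongrightarrow> 0) (at_right 0)"
    by (rule puiseux_ord_fun_finiteE[OF has_puiseux_rep_diff[OF assms(1,3)] finite])
  have "((\<lambda>y. (f y - g y) / y powr e + (g y - h y) / y powr e) \<longlongrightarrow> 0 + 0) (at_right 0)"
    using less e assms
    by (intro tendsto_add tendsto_div_powr_zero_below_puiseux_ord has_puiseux_rep_diff[OF assms(1,2)]
        has_puiseux_rep_diff[OF assms(2,3)]) simp_all
  with not_zero show False
    by (simp add: add_divide_distrib[symmetric])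
qed

lemma puiseux_ord_fun_diff_mono:
  assumes "has_puiseux_rep f" "has_puiseux_rep g" "has_puiseux_rep h"
    and "\<forall>\<^sub>F y in at_right 0. f y < g y" "\<forall>\<^sub>F y in at_right 0. g y < h y"
  shows "puiseux_ord_fun (\<lambda>y. h y - f y) \<le> puiseux_ord_fun (\<lambda>y. g y - f y)"
proof (rule ccontr)
  assume "\<not> ?thesis"
  then have less: "puiseux_ord_fun (\<lambda>y. g y - f y) < puiseux_ord_fun (\<lambda>y. h y - f y)"
    by simp
  then have finite: "puiseux_ord_fun (\<lambda>y. g y - f y) \<noteq> \<infinity>"
    by auto
  obtain e where e: "puiseux_ord_fun (\<lambda>y. g y - f y) = ereal e"
    and not_zero: "\<not> ((\<lambda>y. (g y - f y) / y powr e) \<longlongrightarrow> 0) (at_right 0)"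
    by (rule puiseux_ord_fun_finiteE[OF has_puiseux_rep_diff[OF assms(2,1)] finite])
  have upper_lim: "((\<lambda>y. (h y - f y) / y powr e) \<longlongrightarrow> 0) (at_right 0)"
    using less e by (intro tendsto_div_powr_zero_below_puiseux_ord has_puiseux_rep_diff[OF assms(3,1)]) simp
  have lower: "\<forall>\<^sub>F y in at_right 0. 0 \<le> (g y - f y) / y powr e"
    using assms(4) by eventually_elim simp
  have upper: "\<forall>\<^sub>F y in at_right 0. (g y - f y) / y powr e \<le> (h y - f y) / y powr e"
    using assms(5) eventually_at_right_less[of "0::real"]
    by eventually_elim (simp add: divide_right_mono)
  have "((\<lambda>y. (g y - f y) / y powr e) \<longlongrightarrow> 0) (at_right 0)"
    by (rule tendsto_sandwich[OF lower upper tendsto_const upper_lim])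
  with not_zero show False ..
qed

lemma arc_dist_rep: "arc_dist \<alpha> \<beta> = inverse (puiseux_ord_fun (\<lambda>y. rep_rgerm \<alpha> y - rep_rgerm \<beta> y))"
proof -
  have "germ_minus \<alpha> \<beta> = abs_rgerm (\<lambda>y. rep_rgerm \<alpha> y - rep_rgerm \<beta> y)"
    by (metis germ_minus.abs_eq Quotient_abs_rep[OF Quotient_rgerm])
  then show ?thesis
    unfolding arc_dist_def by (simp add: puiseux_ord.abs_eq divide_ereal_def)
qed

lemma germ_less_rep: "germ_less \<alpha> \<beta> \<longleftrightarrow> (\<forall>\<^sub>F y in at_right 0. rep_rgerm \<alpha> y < rep_rgerm \<beta> y)"
  by (metis germ_less.abs_eq Quotient_abs_rep[OF Quotient_rgerm])

lemma arcs_has_puiseux_rep: "\<alpha> \<in> arcs \<Longrightarrow> has_puiseux_rep (rep_rgerm \<alpha>)"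
  unfolding arcs_def by (simp add: is_arc.rep_eq)

lemma arc_dist_commute: "\<alpha> \<in> arcs \<Longrightarrow> \<beta> \<in> arcs \<Longrightarrow> arc_dist \<alpha> \<beta> = arc_dist \<beta> \<alpha>"
  unfolding arc_dist_rep by (subst puiseux_ord_fun_diff_commute) (simp_all add: arcs_has_puiseux_rep)

lemma arc_dist_ultrametric:
  assumes "\<alpha> \<in> arcs" "\<beta> \<in> arcs" "\<gamma> \<in> arcs"
  shows "arc_dist \<alpha> \<gamma> \<le> max (arc_dist \<alpha> \<beta>) (arc_dist \<beta> \<gamma>)"
proof -
  define ord where "ord \<alpha>' \<beta>' = puiseux_ord_fun (\<lambda>y. rep_rgerm \<alpha>' y - rep_rgerm \<beta>' y)" for \<alpha>' \<beta>'
  have "0 \<le> min (ord \<alpha> \<beta>) (ord \<beta> \<gamma>)"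
    using assms unfolding ord_def
    by (simp add: puiseux_ord_fun_nonneg has_puiseux_rep_diff arcs_has_puiseux_rep)
  moreover have "min (ord \<alpha> \<beta>) (ord \<beta> \<gamma>) \<le> ord \<alpha> \<gamma>"
    using assms unfolding ord_def by (simp add: puiseux_ord_fun_diff_ultrametric arcs_has_puiseux_rep)
  ultimately have "inverse (ord \<alpha> \<gamma>) \<le> inverse (min (ord \<alpha> \<beta>) (ord \<beta> \<gamma>))"
    by (rule ereal_inverse_antimono)
  also have "\<dots> \<le> max (inverse (ord \<alpha> \<beta>)) (inverse (ord \<beta> \<gamma>))"
    by (simp add: min_def)
  finally show ?thesis
    unfolding arc_dist_rep ord_def .
qed

lemma arc_dist_mono:
  assumes "\<alpha> \<in> arcs" "\<beta> \<in> arcs" "\<gamma> \<in> arcs" "germ_less \<alpha> \<beta>" "germ_less \<beta> \<gamma>"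
  shows "arc_dist \<alpha> \<beta> \<le> arc_dist \<alpha> \<gamma>"
proof -
  have "0 \<le> puiseux_ord_fun (\<lambda>y. rep_rgerm \<gamma> y - rep_rgerm \<alpha> y)"
    using assms by (simp add: puiseux_ord_fun_nonneg has_puiseux_rep_diff arcs_has_puiseux_rep)
  moreover have "puiseux_ord_fun (\<lambda>y. rep_rgerm \<gamma> y - rep_rgerm \<alpha> y)
      \<le> puiseux_ord_fun (\<lambda>y. rep_rgerm \<beta> y - rep_rgerm \<alpha> y)"
    using assms by (simp add: puiseux_ord_fun_diff_mono arcs_has_puiseux_rep germ_less_rep)
  ultimately have "arc_dist \<beta> \<alpha> \<le> arc_dist \<gamma> \<alpha>"
    unfolding arc_dist_rep by (rule ereal_inverse_antimono)
  with assms show ?thesis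
    by (metis arc_dist_commute)
qed

lemma arc_dist_le_width: "\<alpha> \<in> A \<Longrightarrow> \<beta> \<in> A \<Longrightarrow> arc_dist \<alpha> \<beta> \<le> width A"
  unfolding width_def by (rule SUP_upper2[of "(\<alpha>, \<beta>)"]) auto

lemma width_le_if_arc_dist_le:
  assumes "A \<subseteq> arcs" "\<alpha> \<in> A" "\<And>\<beta>. \<beta> \<in> A \<Longrightarrow> arc_dist \<beta> \<alpha> \<le> M"
  shows "width A \<le> M"
  unfolding width_def
proof (rule SUP_least, clarify)
  fix \<beta> \<gamma> assume "\<beta> \<in> A" "\<gamma> \<in> A"
  with assms have "arc_dist \<beta> \<gamma> \<le> max (arc_dist \<beta> \<alpha>) (arc_dist \<alpha> \<gamma>)"
    by (intro arc_dist_ultrametric) auto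
  also have "\<dots> \<le> M"
    using assms \<open>\<beta> \<in> A\<close> \<open>\<gamma> \<in> A\<close> by (auto simp: arc_dist_commute[of \<alpha> \<gamma>] subsetD)
  finally show "arc_dist (fst (\<beta>, \<gamma>)) (snd (\<beta>, \<gamma>)) \<le> M"
    by simp
qed

lemma closed_zoneI: "\<alpha> \<in> A \<Longrightarrow> \<beta> \<in> A \<Longrightarrow> width A \<le> arc_dist \<alpha> \<beta> \<Longrightarrow> closed_zone A"
  unfolding closed_zone_def using arc_dist_le_width order_antisym by blast

lemma arc_dist_le_width_between:
  assumes "A \<union> B \<union> C \<subseteq> arcs" "lies_between A B C" "\<alpha> \<in> A" "\<gamma> \<in> C" "\<beta> \<in> A \<union> B \<union> C"
  shows "arc_dist \<beta> \<alpha> \<le> max (width A) (max (width C) (arc_dist \<alpha> \<gamma>))"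
  using \<open>\<beta> \<in> A \<union> B \<union> C\<close>
proof (elim UnE)
  assume "\<beta> \<in> A"
  then show ?thesis
    using \<open>\<alpha> \<in> A\<close> arc_dist_le_width max.coboundedI1 by blast
next
  assume "\<beta> \<in> B"
  with assms have "arc_dist \<alpha> \<beta> \<le> arc_dist \<alpha> \<gamma>"
    unfolding lies_between_def by (intro arc_dist_mono) auto
  moreover have "arc_dist \<beta> \<alpha> = arc_dist \<alpha> \<beta>"
    using assms \<open>\<beta> \<in> B\<close> by (intro arc_dist_commute) auto
  ultimately show ?thesis
    by (simp add: le_max_iff_disj)
next
  assume "\<beta> \<in> C"
  with assms have "arc_dist \<beta> \<alpha> \<le> max (arc_dist \<beta> \<gamma>) (arc_dist \<gamma> \<alpha>)"
    by (intro arc_dist_ultrametric) auto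
  also have "\<dots> \<le> max (width C) (arc_dist \<alpha> \<gamma>)"
  proof (rule max.mono)
    show "arc_dist \<beta> \<gamma> \<le> width C"
      using \<open>\<beta> \<in> C\<close> \<open>\<gamma> \<in> C\<close> by (rule arc_dist_le_width)
    show "arc_dist \<gamma> \<alpha> \<le> arc_dist \<alpha> \<gamma>"
      using assms by (subst arc_dist_commute) auto
  qed
  also have "\<dots> \<le> max (width A) (max (width C) (arc_dist \<alpha> \<gamma>))"
    by (rule max.cobounded2)
  finally show ?thesis .
qed

theorem lemma5p6:
  assumes "zone A" and "zone B" and "zone C"
    and "adjacent A B" and "adjacent B C" and "lies_between A B C"
    and "closed_zone A" and "closed_zone C"
  shows "closed_zone (A \<union> B \<union> C)"
proof -
  obtain \<alpha> \<alpha>' where \<alpha>: "\<alpha> \<in> A" "\<alpha>' \<in> A" "arc_dist \<alpha> \<alpha>' = width A"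
    using \<open>closed_zone A\<close> unfolding closed_zone_def by blast
  obtain \<gamma> \<gamma>' where \<gamma>: "\<gamma> \<in> C" "\<gamma>' \<in> C" "arc_dist \<gamma> \<gamma>' = width C"
    using \<open>closed_zone C\<close> unfolding closed_zone_def by blast
  have arcs: "A \<union> B \<union> C \<subseteq> arcs"
    using \<open>zone A\<close> \<open>zone B\<close> \<open>zone C\<close> unfolding zone_def by blast
  have "width (A \<union> B \<union> C) \<le> max (arc_dist \<alpha> \<alpha>') (max (arc_dist \<gamma> \<gamma>') (arc_dist \<alpha> \<gamma>))"
    using arc_dist_le_width_between[OF arcs \<open>lies_between A B C\<close> \<alpha>(1) \<gamma>(1)] \<alpha> \<gamma>
    by (intro width_le_if_arc_dist_le[OF arcs, of \<alpha>]) auto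
  then consider "width (A \<union> B \<union> C) \<le> arc_dist \<alpha> \<alpha>'" | "width (A \<union> B \<union> C) \<le> arc_dist \<gamma> \<gamma>'"
    | "width (A \<union> B \<union> C) \<le> arc_dist \<alpha> \<gamma>"
    unfolding le_max_iff_disj by blast
  then show ?thesis
    by cases (use \<alpha> \<gamma> in \<open>auto intro: closed_zoneI\<close>)
qed

end
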